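(* Let $a\in(0,1)$, $p\in(0,1)$, and let $X=(X_t)_{t=0,\dots,n}$ be a stationary Markov chain generated by the copula $C(u,v)=a\min(u,v)+(1-a)\max(u+v-1,0)$ and Bernoulli($p$) marginal distribution, and let $\bar p=\frac{1}{n+1}\sum_{t=0}^nX_t$. Then as $n\to\infty$, $$(n+1)\operatorname{Var}(\bar p)\to \frac{p(1-p)(a+1-2p)}{1-a}\ \text{ if } p<1/2,\qquad (n+1)\operatorname{Var}(\bar p)\to \frac{p(1-p)(2p-1+a)}{1-a}\ \text{ if } p\ge1/2;$$ in particular, for $p\neq1/2$ the asymptotic variance of $\bar p$ equals the asymptotic variance of the maximum likelihood estimator $\hat p$ of $p$, namely the $(p,p)$ entry of the asymptotic covariance matrix of $\sqrt{n+1}((\hat a,\hat p)-(a,p))$.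
   Context: A stationary Markov chain $(X_t)$ is generated by a copula $C$ and a marginal cdf $F$ if each $X_t$ has cdf $F$ and $P(X_t\le x,X_{t+1}\le y)=C(F(x),F(y))$ for all $x,y$; Bernoulli($p$) means $P(X_t=1)=p$. For $p\neq1/2$ the maximum likelihood estimator $(\hat a,\hat p)$ of $(a,p)$ (a consistent root of the likelihood equations based on the transition probabilities of the chain) satisfies $\sqrt{n+1}((\hat a,\hat p)-(a,p))\to N_2(0,\Sigma^{-1})$, where the $(p,p)$ entry of $\Sigma^{-1}$ is $\frac{p(1-p)(a+1-2p)}{1-a}$ for $p<1/2$ and $\frac{p(1-p)(2p-1+a)}{1-a}$ for $p>1/2$. *)

theory Defs
  imports "HOL-Probability.Probability"
begin

definition bernoulli_cdf :: "real \<Rightarrow> real \<Rightarrow> real" where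
  "bernoulli_cdf p x = (if x < 0 then 0 else if x < 1 then 1 - p else 1)"

definition mix_copula :: "real \<Rightarrow> real \<Rightarrow> real \<Rightarrow> real" where
  "mix_copula a u v = a * min u v + (1 - a) * max (u + v - 1) 0"

text \<open>The Markov property is stated in the
  discrete form (appropriate since the marginal is Bernoulli, so X t is a.s. in {0,1}):
  P(X_0 = x_0, ..., X_{t+1} = x_{t+1}) P(X_t = x_t)
    = P(X_0 = x_0, ..., X_t = x_t) P(X_t = x_t, X_{t+1} = x_{t+1}).\<close>
definition copula_markov_chain ::
    "'w measure \<Rightarrow> (nat \<Rightarrow> 'w \<Rightarrow> real) \<Rightarrow> (real \<Rightarrow> real \<Rightarrow> real) \<Rightarrow> (real \<Rightarrow> real) \<Rightarrow> bool" where
  "copula_markov_chain M X C F \<longleftrightarrow>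
     (\<forall>t. X t \<in> borel_measurable M) \<and>
     (\<forall>t x. measure M {\<omega> \<in> space M. X t \<omega> \<le> x} = F x) \<and>
     (\<forall>t x y. measure M {\<omega> \<in> space M. X t \<omega> \<le> x \<and> X (Suc t) \<omega> \<le> y} = C (F x) (F y)) \<and>
     (\<forall>t (xs :: nat \<Rightarrow> real).
        measure M {\<omega> \<in> space M. \<forall>i\<le>Suc t. X i \<omega> = xs i} * measure M {\<omega> \<in> space M. X t \<omega> = xs t}
      = measure M {\<omega> \<in> space M. \<forall>i\<le>t. X i \<omega> = xs i} *
        measure M {\<omega> \<in> space M. X t \<omega> = xs t \<and> X (Suc t) \<omega> = xs (Suc t)})"

text \<open>The (p,p) entry of the inverse Fisher information Sigma^{-1}, i.e. the asymptotic
  variance of the MLE of p, as given in the context (for p \<noteq> 1/2).\<close>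
definition mle_asym_var_p :: "real \<Rightarrow> real \<Rightarrow> real" where
  "mle_asym_var_p a p = (if p < 1/2 then p * (1 - p) * (a + 1 - 2 * p) / (1 - a)
                         else p * (1 - p) * (2 * p - 1 + a) / (1 - a))"

end

(*
  Conditioning on the state at time s + k and using the Markov property gives
  Cov(X_s, X_{s+k}) = rho * Cov(X_s, X_{s+k-1}), where
  rho = (C(1-p,1-p) - (1-p)^2) / (p(1-p)) is the correlation of two consecutive
  states; hence Cov(X_s, X_t) = p(1-p) rho^|s-t|.  Therefore
  (n+1) Var(pbar) = p(1-p) (1/(n+1)) sum_{s,t<=n} rho^|s-t|, which tends to
  p(1-p)(1+rho)/(1-rho) when |rho| < 1.  For the copula
  a min(u,v) + (1-a) max(u+v-1,0) one finds rho = (a-p)/(1-p) if p < 1/2 and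
  rho = (p-1+a)/p otherwise, which turns this limit into the stated values.
*)

theory Submission
  imports Defs
begin

lemma sum_power_absdiff_atMost_Suc:
  fixes r :: "'a::comm_ring_1"
  shows "(\<Sum>s\<le>Suc n. \<Sum>t\<le>Suc n. r ^ (max s t - min s t))
       = (\<Sum>s\<le>n. \<Sum>t\<le>n. r ^ (max s t - min s t)) + 2 * (\<Sum>s\<le>n. r ^ (Suc n - s)) + 1"
  by (simp add: sum.distrib max_def min_def)

lemma one_minus_square_mult_sum_power_absdiff:
  fixes r :: "'a::comm_ring_1"
  shows "(1 - r)\<^sup>2 * (\<Sum>s\<le>n. \<Sum>t\<le>n. r ^ (max s t - min s t))
       = of_nat (n + 1) * (1 - r\<^sup>2) - 2 * r * (1 - r ^ Suc n)"
proof (induction n)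
  case 0
  then show ?case by (simp add: power2_eq_square algebra_simps)
next
  case (Suc n)
  have geometric: "(1 - r) * (\<Sum>s\<le>n. r ^ (Suc n - s)) = r * (1 - r ^ Suc n)"
  proof -
    have "(\<Sum>s\<le>n. r ^ (Suc n - s)) = r * (\<Sum>s\<le>n. r ^ (n - s))"
      by (simp add: sum_distrib_left Suc_diff_le flip: power_Suc)
    moreover have "1 - r ^ Suc n = (1 - r) * (\<Sum>s\<le>n. r ^ (n - s))"
      using one_diff_power_eq'[of r "Suc n"] by (simp add: lessThan_Suc_atMost)
    ultimately show ?thesis
      by (metis mult.left_commute)
  qed
  have "(1 - r)\<^sup>2 * (\<Sum>s\<le>Suc n. \<Sum>t\<le>Suc n. r ^ (max s t - min s t))
      = (1 - r)\<^sup>2 * (\<Sum>s\<le>n. \<Sum>t\<le>n. r ^ (max s t - min s t))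
        + 2 * (1 - r) * ((1 - r) * (\<Sum>s\<le>n. r ^ (Suc n - s))) + (1 - r)\<^sup>2"
    unfolding sum_power_absdiff_atMost_Suc by (simp add: power2_eq_square algebra_simps)
  also have "\<dots> = of_nat (n + 1) * (1 - r\<^sup>2) - 2 * r * (1 - r ^ Suc n)
        + 2 * (1 - r) * (r * (1 - r ^ Suc n)) + (1 - r)\<^sup>2"
    by (simp only: Suc.IH geometric)
  also have "\<dots> = of_nat (Suc n + 1) * (1 - r\<^sup>2) - 2 * r * (1 - r ^ Suc (Suc n))"
    by (simp add: power2_eq_square algebra_simps)
  finally show ?case .
qed

lemma sum_power_absdiff_average_limit:
  fixes r :: real
  assumes "\<bar>r\<bar> < 1"
  shows "(\<lambda>n. (\<Sum>s\<le>n. \<Sum>t\<le>n. r ^ (max s t - min s t)) / real (n + 1)) \<longlonglongrightarrow> (1 + r) / (1 - r)"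
proof -
  have "r \<noteq> 1" using assms by auto
  have closed_form: "(\<Sum>s\<le>n. \<Sum>t\<le>n. r ^ (max s t - min s t)) / real (n + 1)
      = (1 - r\<^sup>2 - 2 * r * (1 - r ^ Suc n) * inverse (real (Suc n))) / (1 - r)\<^sup>2" for n
  proof -
    have "(1 - r)\<^sup>2 \<noteq> 0" using \<open>r \<noteq> 1\<close> by simp
    then have "(\<Sum>s\<le>n. \<Sum>t\<le>n. r ^ (max s t - min s t))
        = (real (n + 1) * (1 - r\<^sup>2) - 2 * r * (1 - r ^ Suc n)) / (1 - r)\<^sup>2"
      using one_minus_square_mult_sum_power_absdiff[of r n] by (simp add: eq_divide_eq mult.commute)
    then show ?thesis by (simp add: field_simps)
  qed
  have "(\<lambda>n. (1 - r\<^sup>2 - 2 * r * (1 - r ^ Suc n) * inverse (real (Suc n))) / (1 - r)\<^sup>2)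
      \<longlonglongrightarrow> (1 - r\<^sup>2 - 2 * r * (1 - 0) * 0) / (1 - r)\<^sup>2"
    using assms
    by (intro tendsto_intros LIMSEQ_Suc[OF LIMSEQ_power_zero] LIMSEQ_inverse_real_of_nat) auto
  also have "(1 - r\<^sup>2 - 2 * r * (1 - 0) * 0) / (1 - r)\<^sup>2 = (1 + r) / (1 - r)"
  proof -
    have "1 - r\<^sup>2 = (1 + r) * (1 - r)" "(1 - r)\<^sup>2 = (1 - r) * (1 - r)"
      by (simp_all add: power2_eq_square algebra_simps)
    then show ?thesis using \<open>r \<noteq> 1\<close> by simp
  qed
  finally show ?thesis
    unfolding closed_form .
qed

lemma (in prob_space) prob_eq_cdf_jump:
  fixes Y :: "'a \<Rightarrow> real"
  assumes Y: "Y \<in> borel_measurable M"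
    and left_limit: "((\<lambda>x. prob {\<omega> \<in> space M. Y \<omega> \<le> x}) \<longlongrightarrow> L) (at_left a)"
  shows "prob {\<omega> \<in> space M. Y \<omega> = a} = prob {\<omega> \<in> space M. Y \<omega> \<le> a} - L"
proof -
  interpret law: real_distribution "distr M borel Y"
    using Y by simp
  have prob_distr: "measure (distr M borel Y) B = prob {\<omega> \<in> space M. Y \<omega> \<in> B}" if "B \<in> sets borel" for B
    using Y that by (simp add: measure_distr vimage_def Int_def conj_commute)
  have "(cdf (distr M borel Y) \<longlongrightarrow> prob {\<omega> \<in> space M. Y \<omega> < a}) (at_left a)"
    using law.cdf_at_left[of a] by (simp add: prob_distr)
  moreover have "cdf (distr M borel Y) = (\<lambda>x. prob {\<omega> \<in> space M. Y \<omega> \<le> x})"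
    by (simp add: fun_eq_iff cdf_def prob_distr)
  ultimately have "L = prob {\<omega> \<in> space M. Y \<omega> < a}"
    using tendsto_unique[OF trivial_limit_at_left_real left_limit] by simp
  moreover have "prob {\<omega> \<in> space M. Y \<omega> = a}
      = prob ({\<omega> \<in> space M. Y \<omega> \<le> a} - {\<omega> \<in> space M. Y \<omega> < a})"
    by (rule arg_cong[where f = prob]) auto
  ultimately show ?thesis
    using Y by (subst (asm) finite_measure_Diff) auto
qed

lemma (in prob_space) bernoulli_cdf_distribution:
  fixes Y :: "'a \<Rightarrow> real"
  assumes Y: "Y \<in> borel_measurable M"
    and cdf: "\<And>x. prob {\<omega> \<in> space M. Y \<omega> \<le> x} = bernoulli_cdf p x"
  shows "prob {\<omega> \<in> space M. Y \<omega> = 0} = 1 - p"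
    and "prob {\<omega> \<in> space M. Y \<omega> = 1} = p"
    and "AE \<omega> in M. Y \<omega> = 0 \<or> Y \<omega> = 1"
proof -
  have "\<forall>\<^sub>F x in at_left (0::real). x \<in> {-1<..<0}"
    by (rule eventually_at_left_real) simp
  then have "\<forall>\<^sub>F x in at_left 0. prob {\<omega> \<in> space M. Y \<omega> \<le> x} = 0"
    by eventually_elim (simp add: cdf bernoulli_cdf_def)
  then show P0: "prob {\<omega> \<in> space M. Y \<omega> = 0} = 1 - p"
    using prob_eq_cdf_jump[OF Y tendsto_eventually] by (simp add: cdf bernoulli_cdf_def)
  have "\<forall>\<^sub>F x in at_left (1::real). x \<in> {0<..<1}"
    by (rule eventually_at_left_real) simp
  then have "\<forall>\<^sub>F x in at_left 1. prob {\<omega> \<in> space M. Y \<omega> \<le> x} = 1 - p"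
    by eventually_elim (simp add: cdf bernoulli_cdf_def)
  then show P1: "prob {\<omega> \<in> space M. Y \<omega> = 1} = p"
    using prob_eq_cdf_jump[OF Y tendsto_eventually] by (simp add: cdf bernoulli_cdf_def)
  have "prob ({\<omega> \<in> space M. Y \<omega> = 0} \<union> {\<omega> \<in> space M. Y \<omega> = 1}) = 1"
    using Y by (subst finite_measure_Union) (auto simp: P0 P1)
  then show "AE \<omega> in M. Y \<omega> = 0 \<or> Y \<omega> = 1"
    by (rule AE_prob_1[THEN AE_mp]) auto
qed

lemma (in prob_space) expectation_AE_eq_indicator:
  fixes Y :: "'a \<Rightarrow> real"
  assumes "Y \<in> borel_measurable M" "A \<in> events" "AE \<omega> in M. Y \<omega> = indicator A \<omega>"
  shows "integrable M Y" and "expectation Y = prob A"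
proof -
  have "integrable M (indicator A :: 'a \<Rightarrow> real)"
    using assms(2) by (simp add: emeasure_eq_measure)
  then show "integrable M Y"
    by (rule integrable_cong_AE_imp) (use assms in \<open>auto elim: AE_mp\<close>)
  have "expectation Y = expectation (indicator A)"
    by (rule integral_cong_AE) (use assms in auto)
  then show "expectation Y = prob A"
    using assms(2) by simp
qed

lemma (in prob_space) variance_average:
  fixes Z :: "nat \<Rightarrow> 'a \<Rightarrow> real"
  assumes Z: "\<And>t. integrable M (Z t)" "\<And>s t. integrable M (\<lambda>\<omega>. Z s \<omega> * Z t \<omega>)"
    and mean: "\<And>t. expectation (Z t) = \<mu>"
  shows "variance (\<lambda>\<omega>. (\<Sum>t\<le>n. Z t \<omega>) / real (n + 1))
       = (\<Sum>s\<le>n. \<Sum>t\<le>n. expectation (\<lambda>\<omega>. Z s \<omega> * Z t \<omega>) - \<mu>\<^sup>2) / (real (n + 1))\<^sup>2"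
proof -
  define Y where "Y = (\<lambda>\<omega>. (\<Sum>t\<le>n. Z t \<omega>) / real (n + 1))"
  have square: "(Y \<omega>)\<^sup>2 = (\<Sum>s\<le>n. \<Sum>t\<le>n. Z s \<omega> * Z t \<omega>) / (real (n + 1))\<^sup>2" for \<omega>
    by (simp add: Y_def power2_eq_square sum_product)
  have "integrable M Y" "expectation Y = \<mu>"
    unfolding Y_def using Z by (simp_all add: mean)
  moreover have "integrable M (\<lambda>\<omega>. (Y \<omega>)\<^sup>2)"
    "expectation (\<lambda>\<omega>. (Y \<omega>)\<^sup>2) = (\<Sum>s\<le>n. \<Sum>t\<le>n. expectation (\<lambda>\<omega>. Z s \<omega> * Z t \<omega>)) / (real (n + 1))\<^sup>2"
    unfolding square using Z by simp_all
  ultimately have "variance Y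
      = (\<Sum>s\<le>n. \<Sum>t\<le>n. expectation (\<lambda>\<omega>. Z s \<omega> * Z t \<omega>)) / (real (n + 1))\<^sup>2 - \<mu>\<^sup>2"
    by (metis variance_eq)
  also have "\<dots> = (\<Sum>s\<le>n. \<Sum>t\<le>n. expectation (\<lambda>\<omega>. Z s \<omega> * Z t \<omega>) - \<mu>\<^sup>2) / (real (n + 1))\<^sup>2"
  proof -
    have "(\<Sum>s\<le>n. \<Sum>t\<le>n. expectation (\<lambda>\<omega>. Z s \<omega> * Z t \<omega>) - \<mu>\<^sup>2)
        = (\<Sum>s\<le>n. \<Sum>t\<le>n. expectation (\<lambda>\<omega>. Z s \<omega> * Z t \<omega>)) - (real (n + 1))\<^sup>2 * \<mu>\<^sup>2"
      by (simp add: sum_subtractf power2_eq_square)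
    then show ?thesis
      by (simp add: diff_divide_distrib del: of_nat_Suc)
  qed
  finally show ?thesis
    unfolding Y_def .
qed

definition bernoulli_copula_corr :: "(real \<Rightarrow> real \<Rightarrow> real) \<Rightarrow> real \<Rightarrow> real" where
  "bernoulli_copula_corr C p = (C (1 - p) (1 - p) - (1 - p)\<^sup>2) / (p * (1 - p))"

locale bernoulli_copula_chain = prob_space M for M :: "'w measure" +
  fixes X :: "nat \<Rightarrow> 'w \<Rightarrow> real" and C :: "real \<Rightarrow> real \<Rightarrow> real" and p :: real
  assumes p_pos: "0 < p" and p_less_1: "p < 1"
    and markov_chain: "copula_markov_chain M X C (bernoulli_cdf p)"
begin

lemma X_measurable [measurable]: "X t \<in> borel_measurable M"
  using markov_chain by (simp add: copula_markov_chain_def)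

lemma prob_X_le: "prob {\<omega> \<in> space M. X t \<omega> \<le> x} = bernoulli_cdf p x"
  using markov_chain by (simp add: copula_markov_chain_def)

lemma prob_X_le_X_Suc_le:
  "prob {\<omega> \<in> space M. X t \<omega> \<le> x \<and> X (Suc t) \<omega> \<le> y} = C (bernoulli_cdf p x) (bernoulli_cdf p y)"
  using markov_chain by (simp add: copula_markov_chain_def)

lemma markov_property:
  "prob {\<omega> \<in> space M. \<forall>i\<le>Suc t. X i \<omega> = xs i} * prob {\<omega> \<in> space M. X t \<omega> = xs t}
   = prob {\<omega> \<in> space M. \<forall>i\<le>t. X i \<omega> = xs i} *
     prob {\<omega> \<in> space M. X t \<omega> = xs t \<and> X (Suc t) \<omega> = xs (Suc t)}"
  using markov_chain unfolding copula_markov_chain_def by blast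

lemma prob_X_eq_0: "prob {\<omega> \<in> space M. X t \<omega> = 0} = 1 - p"
  and prob_X_eq_1: "prob {\<omega> \<in> space M. X t \<omega> = 1} = p"
  and AE_X_eq_0_1: "AE \<omega> in M. X t \<omega> = 0 \<or> X t \<omega> = 1"
  using bernoulli_cdf_distribution[OF X_measurable prob_X_le] by blast+

lemma prob_split_X:
  assumes "{\<omega> \<in> space M. P \<omega>} \<in> events"
  shows "prob {\<omega> \<in> space M. P \<omega>}
       = prob {\<omega> \<in> space M. P \<omega> \<and> X t \<omega> = 0} + prob {\<omega> \<in> space M. P \<omega> \<and> X t \<omega> = 1}"
proof -
  have "prob {\<omega> \<in> space M. P \<omega>}
      = prob ({\<omega> \<in> space M. P \<omega> \<and> X t \<omega> = 0} \<union> {\<omega> \<in> space M. P \<omega> \<and> X t \<omega> = 1})"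
    using AE_X_eq_0_1[of t] assms by (intro measure_eq_AE) (auto elim: AE_mp)
  also have "\<dots> = prob {\<omega> \<in> space M. P \<omega> \<and> X t \<omega> = 0} + prob {\<omega> \<in> space M. P \<omega> \<and> X t \<omega> = 1}"
    using assms by (intro finite_measure_Union) auto
  finally show ?thesis .
qed

lemma prob_X_eq_0_X_Suc_eq_0:
  "prob {\<omega> \<in> space M. X t \<omega> = 0 \<and> X (Suc t) \<omega> = 0} = C (1 - p) (1 - p)"
proof -
  have "prob {\<omega> \<in> space M. X t \<omega> = 0 \<and> X (Suc t) \<omega> = 0}
      = prob {\<omega> \<in> space M. X t \<omega> \<le> 0 \<and> X (Suc t) \<omega> \<le> 0}"
    using AE_X_eq_0_1[of t] AE_X_eq_0_1[of "Suc t"]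
    by (intro measure_eq_AE) (auto elim!: AE_mp)
  then show ?thesis
    by (simp add: prob_X_le_X_Suc_le bernoulli_cdf_def)
qed

lemma prob_X_eq_0_X_Suc_eq_1:
  "prob {\<omega> \<in> space M. X t \<omega> = 0 \<and> X (Suc t) \<omega> = 1} = 1 - p - C (1 - p) (1 - p)"
  using prob_split_X[of "\<lambda>\<omega>. X t \<omega> = 0" "Suc t"]
  by (simp add: prob_X_eq_0 prob_X_eq_0_X_Suc_eq_0)

lemma prob_X_eq_1_X_Suc_eq_1:
  "prob {\<omega> \<in> space M. X t \<omega> = 1 \<and> X (Suc t) \<omega> = 1} = 2 * p - 1 + C (1 - p) (1 - p)"
proof -
  have "prob {\<omega> \<in> space M. X (Suc t) \<omega> = 1}
      = prob {\<omega> \<in> space M. X t \<omega> = 0 \<and> X (Suc t) \<omega> = 1}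
        + prob {\<omega> \<in> space M. X t \<omega> = 1 \<and> X (Suc t) \<omega> = 1}"
    using prob_split_X[of "\<lambda>\<omega>. X (Suc t) \<omega> = 1" t] by (simp add: conj_commute)
  then show ?thesis
    by (simp add: prob_X_eq_1 prob_X_eq_0_X_Suc_eq_1)
qed

definition path_event :: "nat \<Rightarrow> (nat \<Rightarrow> real) \<Rightarrow> 'w set" where
  "path_event t xs = {\<omega> \<in> space M. \<forall>i\<le>t. X i \<omega> = xs i}"

lemma path_event_sets [measurable]: "path_event t xs \<in> events"
proof -
  have "path_event t xs = {\<omega> \<in> space M. \<forall>i\<in>{..t}. X i \<omega> = xs i}"
    by (auto simp: path_event_def)
  also have "\<dots> \<in> events"
    by measurable
  finally show ?thesis .
qed

lemma prob_eq_sum_path_events: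
  assumes E: "E \<in> events"
  shows "prob E = (\<Sum>xs \<in> {..t} \<rightarrow>\<^sub>E {0, 1}. prob (E \<inter> path_event t xs))"
proof -
  let ?Paths = "{..t} \<rightarrow>\<^sub>E {0::real, 1}"
  have "disjoint_family_on (\<lambda>xs. E \<inter> path_event t xs) ?Paths"
    unfolding disjoint_family_on_def
  proof (intro ballI impI)
    fix xs ys assume "xs \<in> ?Paths" "ys \<in> ?Paths" "xs \<noteq> ys"
    then obtain i where "i \<le> t" "xs i \<noteq> ys i"
      using PiE_ext[of xs "{..t}" "\<lambda>_. {0, 1}" ys] by auto
    then show "(E \<inter> path_event t xs) \<inter> (E \<inter> path_event t ys) = {}"
      by (auto simp: path_event_def)
  qed
  then have sum: "prob (\<Union>xs\<in>?Paths. E \<inter> path_event t xs) = (\<Sum>xs\<in>?Paths. prob (E \<inter> path_event t xs))"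
    using E by (intro measure_finite_Union) (auto simp: finite_PiE)
  have "AE \<omega> in M. \<omega> \<in> E \<longleftrightarrow> \<omega> \<in> (\<Union>xs\<in>?Paths. E \<inter> path_event t xs)"
  proof -
    have "AE \<omega> in M. \<forall>i. X i \<omega> = 0 \<or> X i \<omega> = 1"
      using AE_X_eq_0_1 by (simp add: AE_all_countable)
    then show ?thesis
    proof (rule AE_mp, intro AE_I2 impI)
      fix \<omega> assume "\<omega> \<in> space M" "\<forall>i. X i \<omega> = 0 \<or> X i \<omega> = 1"
      then have "restrict (\<lambda>i. X i \<omega>) {..t} \<in> ?Paths" "\<omega> \<in> path_event t (restrict (\<lambda>i. X i \<omega>) {..t})"
        by (auto simp: path_event_def)
      then show "\<omega> \<in> E \<longleftrightarrow> \<omega> \<in> (\<Union>xs\<in>?Paths. E \<inter> path_event t xs)"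
        by blast
    qed
  qed
  moreover have "(\<Union>xs\<in>?Paths. E \<inter> path_event t xs) \<in> events"
    using E by (intro sets.finite_UN) (auto simp: finite_PiE)
  ultimately have "prob E = prob (\<Union>xs\<in>?Paths. E \<inter> path_event t xs)"
    using E by (intro measure_eq_AE)
  with sum show ?thesis
    by simp
qed

lemma prob_markov_triple:
  assumes "s \<le> t"
  shows "prob {\<omega> \<in> space M. X s \<omega> = x \<and> X t \<omega> = z \<and> X (Suc t) \<omega> = y} * prob {\<omega> \<in> space M. X t \<omega> = z}
       = prob {\<omega> \<in> space M. X s \<omega> = x \<and> X t \<omega> = z} * prob {\<omega> \<in> space M. X t \<omega> = z \<and> X (Suc t) \<omega> = y}"
proof -
  let ?E3 = "{\<omega> \<in> space M. X s \<omega> = x \<and> X t \<omega> = z \<and> X (Suc t) \<omega> = y}"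
  let ?E2 = "{\<omega> \<in> space M. X s \<omega> = x \<and> X t \<omega> = z}"
  have E3: "?E3 \<inter> path_event t xs
      = (if xs s = x \<and> xs t = z then path_event (Suc t) (xs(Suc t := y)) else {})" for xs
    using assms by (auto simp: path_event_def le_Suc_eq)
  have E2: "?E2 \<inter> path_event t xs = (if xs s = x \<and> xs t = z then path_event t xs else {})" for xs
    using assms by (auto simp: path_event_def)
  have markov: "prob (path_event (Suc t) (xs(Suc t := y))) * prob {\<omega> \<in> space M. X t \<omega> = xs t}
      = prob (path_event t xs) * prob {\<omega> \<in> space M. X t \<omega> = xs t \<and> X (Suc t) \<omega> = y}" for xs
  proof -
    have "path_event t (xs(Suc t := y)) = path_event t xs"
      by (auto simp: path_event_def)
    then show ?thesis
      using markov_property[of t "xs(Suc t := y)"] by (simp add: path_event_def)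
  qed
  \<comment> \<open>sum the Markov identity over all 0-1 paths up to time t\<close>
  have "prob ?E3 = (\<Sum>xs \<in> {..t} \<rightarrow>\<^sub>E {0, 1}. prob (?E3 \<inter> path_event t xs))"
    "prob ?E2 = (\<Sum>xs \<in> {..t} \<rightarrow>\<^sub>E {0, 1}. prob (?E2 \<inter> path_event t xs))"
    by (rule prob_eq_sum_path_events, measurable)+
  then show ?thesis
    by (simp only: sum_distrib_right) (auto simp: E3 E2 markov intro!: sum.cong)
qed

abbreviation corr :: real where
  "corr \<equiv> bernoulli_copula_corr C p"

lemma prob_X_eq_1_lag_Suc:
  "prob {\<omega> \<in> space M. X s \<omega> = 1 \<and> X (s + Suc k) \<omega> = 1} - p\<^sup>2
   = corr * (prob {\<omega> \<in> space M. X s \<omega> = 1 \<and> X (s + k) \<omega> = 1} - p\<^sup>2)"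
proof -
  define t where "t = s + k"
  define d where "d = C (1 - p) (1 - p)"
  define A where "A = prob {\<omega> \<in> space M. X s \<omega> = 1 \<and> X t \<omega> = 1}"
  have "s \<le> t" by (simp add: t_def)
  have through_state_0: "prob {\<omega> \<in> space M. X s \<omega> = 1 \<and> X t \<omega> = 0 \<and> X (Suc t) \<omega> = 1}
      = (p - A) * (1 - p - d) / (1 - p)"
  proof -
    have "p = prob {\<omega> \<in> space M. X s \<omega> = 1 \<and> X t \<omega> = 0} + A"
      using prob_split_X[of "\<lambda>\<omega>. X s \<omega> = 1" t] by (simp add: prob_X_eq_1 A_def)
    then show ?thesis
      using prob_markov_triple[OF \<open>s \<le> t\<close>, of 1 0 1] p_less_1
      by (simp add: prob_X_eq_0 prob_X_eq_0_X_Suc_eq_1 d_def eq_divide_eq)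
  qed
  have through_state_1: "prob {\<omega> \<in> space M. X s \<omega> = 1 \<and> X t \<omega> = 1 \<and> X (Suc t) \<omega> = 1}
      = A * (2 * p - 1 + d) / p"
    using prob_markov_triple[OF \<open>s \<le> t\<close>, of 1 1 1] p_pos
    by (simp add: prob_X_eq_1 prob_X_eq_1_X_Suc_eq_1 A_def d_def eq_divide_eq)
  have "prob {\<omega> \<in> space M. X s \<omega> = 1 \<and> X (Suc t) \<omega> = 1}
      = prob {\<omega> \<in> space M. X s \<omega> = 1 \<and> X t \<omega> = 0 \<and> X (Suc t) \<omega> = 1}
        + prob {\<omega> \<in> space M. X s \<omega> = 1 \<and> X t \<omega> = 1 \<and> X (Suc t) \<omega> = 1}"
    using prob_split_X[of "\<lambda>\<omega>. X s \<omega> = 1 \<and> X (Suc t) \<omega> = 1" t] by (simp add: conj_ac)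
  also have "\<dots> = (p - A) * (1 - p - d) / (1 - p) + A * (2 * p - 1 + d) / p"
    by (simp only: through_state_0 through_state_1)
  finally show ?thesis
    using p_pos p_less_1
    by (simp add: t_def A_def d_def bernoulli_copula_corr_def field_simps power2_eq_square)
qed

lemma prob_X_eq_1_lag:
  "prob {\<omega> \<in> space M. X s \<omega> = 1 \<and> X (s + k) \<omega> = 1} = p\<^sup>2 + p * (1 - p) * corr ^ k"
proof (induction k)
  case 0
  then show ?case
    by (simp add: prob_X_eq_1 power2_eq_square algebra_simps)
next
  case (Suc k)
  have "prob {\<omega> \<in> space M. X s \<omega> = 1 \<and> X (s + Suc k) \<omega> = 1} - p\<^sup>2 = corr * (p * (1 - p) * corr ^ k)"
    using prob_X_eq_1_lag_Suc[of s k] Suc.IH by simp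
  then show ?case
    by (simp add: algebra_simps)
qed

lemma AE_X_mult_eq_indicator:
  "AE \<omega> in M. X s \<omega> * X t \<omega> = indicator {\<omega> \<in> space M. X s \<omega> = 1 \<and> X t \<omega> = 1} \<omega>"
  using AE_space AE_X_eq_0_1[of s] AE_X_eq_0_1[of t] by eventually_elim (auto simp: indicator_def)

lemma integrable_X_mult: "integrable M (\<lambda>\<omega>. X s \<omega> * X t \<omega>)"
  and expectation_X_mult:
    "expectation (\<lambda>\<omega>. X s \<omega> * X t \<omega>) = prob {\<omega> \<in> space M. X s \<omega> = 1 \<and> X t \<omega> = 1}"
  by (rule expectation_AE_eq_indicator[OF _ _ AE_X_mult_eq_indicator], measurable)+

lemma AE_X_eq_indicator: "AE \<omega> in M. X t \<omega> = indicator {\<omega> \<in> space M. X t \<omega> = 1} \<omega>"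
  using AE_space AE_X_eq_0_1[of t] by eventually_elim (auto simp: indicator_def)

lemma integrable_X: "integrable M (X t)"
  and expectation_X: "expectation (X t) = p"
  using expectation_AE_eq_indicator[OF _ _ AE_X_eq_indicator] by (simp_all add: prob_X_eq_1)

lemma covariance_X:
  "expectation (\<lambda>\<omega>. X s \<omega> * X t \<omega>) - p\<^sup>2 = p * (1 - p) * corr ^ (max s t - min s t)"
proof (cases "s \<le> t")
  case True
  then show ?thesis
    using prob_X_eq_1_lag[of s "t - s"] by (simp add: expectation_X_mult)
next
  case False
  then show ?thesis
    using prob_X_eq_1_lag[of t "s - t"] by (simp add: expectation_X_mult conj_commute)
qed

theorem average_variance_limit:
  assumes "\<bar>corr\<bar> < 1"
  shows "(\<lambda>n. real (n + 1) * variance (\<lambda>\<omega>. (\<Sum>t\<le>n. X t \<omega>) / real (n + 1)))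
       \<longlonglongrightarrow> p * (1 - p) * ((1 + corr) / (1 - corr))"
proof -
  have scaled_variance: "real (n + 1) * variance (\<lambda>\<omega>. (\<Sum>t\<le>n. X t \<omega>) / real (n + 1))
      = p * (1 - p) * ((\<Sum>s\<le>n. \<Sum>t\<le>n. corr ^ (max s t - min s t)) / real (n + 1))" for n
  proof -
    have "variance (\<lambda>\<omega>. (\<Sum>t\<le>n. X t \<omega>) / real (n + 1))
        = p * (1 - p) * (\<Sum>s\<le>n. \<Sum>t\<le>n. corr ^ (max s t - min s t)) / (real (n + 1))\<^sup>2"
      using variance_average[OF integrable_X integrable_X_mult expectation_X, where n = n]
      by (simp only: covariance_X sum_distrib_left)
    then show ?thesis
      by (simp add: power2_eq_square)
  qed
  show ?thesis
    unfolding scaled_variance by (rule tendsto_mult_left[OF sum_power_absdiff_average_limit[OF assms]])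
qed

end

lemma mix_copula_corr:
  assumes "0 < p" "p < 1"
  shows "bernoulli_copula_corr (mix_copula a) p = (if p < 1/2 then (a - p) / (1 - p) else (p - 1 + a) / p)"
proof (cases "p < 1/2")
  case True
  then have "mix_copula a (1 - p) (1 - p) - (1 - p)\<^sup>2 = p * (a - p)"
    by (simp add: mix_copula_def power2_eq_square algebra_simps)
  then show ?thesis
    using True assms by (simp add: bernoulli_copula_corr_def)
next
  case False
  then have "mix_copula a (1 - p) (1 - p) - (1 - p)\<^sup>2 = (1 - p) * (p - 1 + a)"
    by (simp add: mix_copula_def power2_eq_square algebra_simps)
  then show ?thesis
    using False assms by (simp add: bernoulli_copula_corr_def)
qed

lemma abs_mix_copula_corr_less_1:
  assumes "0 < a" "a < 1" "0 < p" "p < 1"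
  shows "\<bar>bernoulli_copula_corr (mix_copula a) p\<bar> < 1"
  using assms by (simp add: mix_copula_corr abs_less_iff field_simps)

lemma mix_copula_asymptotic_variance:
  assumes "a < 1" "0 < p" "p < 1"
  defines "\<rho> \<equiv> bernoulli_copula_corr (mix_copula a) p"
  shows "p * (1 - p) * ((1 + \<rho>) / (1 - \<rho>)) = mle_asym_var_p a p"
proof (cases "p < 1/2")
  case True
  have "1 + \<rho> = (a + 1 - 2 * p) / (1 - p)" "1 - \<rho> = (1 - a) / (1 - p)"
    using True assms by (simp_all add: mix_copula_corr field_simps)
  then show ?thesis
    using True assms by (simp add: mle_asym_var_p_def)
next
  case False
  have "1 + \<rho> = (2 * p - 1 + a) / p" "1 - \<rho> = (1 - a) / p"
    using False assms by (simp_all add: mix_copula_corr field_simps)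
  then show ?thesis
    using False assms by (simp add: mle_asym_var_p_def)
qed

theorem proposition4:
  fixes M :: "'w measure" and X :: "nat \<Rightarrow> 'w \<Rightarrow> real" and a p :: real
  assumes "prob_space M"
    and "0 < a" "a < 1" "0 < p" "p < 1"
    and "copula_markov_chain M X (mix_copula a) (bernoulli_cdf p)"
  defines "pbar \<equiv> (\<lambda>n \<omega>. (\<Sum>t\<le>n. X t \<omega>) / real (n + 1))"
  shows "(p < 1/2 \<longrightarrow>
           (\<lambda>n. real (n + 1) * prob_space.variance M (pbar n))
             \<longlonglongrightarrow> p * (1 - p) * (a + 1 - 2 * p) / (1 - a))
       \<and> (p \<ge> 1/2 \<longrightarrow>
           (\<lambda>n. real (n + 1) * prob_space.variance M (pbar n))
             \<longlonglongrightarrow> p * (1 - p) * (2 * p - 1 + a) / (1 - a))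
       \<and> (p \<noteq> 1/2 \<longrightarrow>
           (\<lambda>n. real (n + 1) * prob_space.variance M (pbar n))
             \<longlonglongrightarrow> mle_asym_var_p a p)"
proof -
  interpret bernoulli_copula_chain M X "mix_copula a" p
    using assms by (simp add: bernoulli_copula_chain_def bernoulli_copula_chain_axioms_def)
  have "(\<lambda>n. real (n + 1) * variance (pbar n)) \<longlonglongrightarrow> p * (1 - p) * ((1 + corr) / (1 - corr))"
    unfolding pbar_def using assms by (intro average_variance_limit abs_mix_copula_corr_less_1)
  then have "(\<lambda>n. real (n + 1) * variance (pbar n)) \<longlonglongrightarrow> mle_asym_var_p a p"
    using assms by (simp only: mix_copula_asymptotic_variance)
  then show ?thesis
    by (cases "p < 1/2") (auto simp: mle_asym_var_p_def)
qed

end
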